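(* Let $G$ be a factor-critical graph. Then $G$ is equimatchable if and only if there is no independent set $I$ with $3$ vertices such that $G\setminus I$ has a perfect matching.
   Context: All graphs are finite and simple. A graph is equimatchable if all its maximal matchings have the same cardinality. A graph $G$ is factor-critical if $G-v$ has a perfect matching for every $v\in V(G)$. For $I\subseteq V(G)$, $G\setminus I$ is the subgraph induced by $V(G)\setminus I$. *)

theory Defs
  imports Main
begin

definition graph :: "'a set \<Rightarrow> 'a set set \<Rightarrow> bool" where
  "graph V E \<longleftrightarrow> finite V \<and> (\<forall>e\<in>E. \<exists>u v. e = {u, v} \<and> u \<noteq> v \<and> u \<in> V \<and> v \<in> V)"

definition matching :: "'a set set \<Rightarrow> 'a set set \<Rightarrow> bool" where
  "matching E M \<longleftrightarrow> M \<subseteq> E \<and> (\<forall>e1\<in>M. \<forall>e2\<in>M. e1 \<noteq> e2 \<longrightarrow> e1 \<inter> e2 = {})"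

definition maximal_matching :: "'a set set \<Rightarrow> 'a set set \<Rightarrow> bool" where
  "maximal_matching E M \<longleftrightarrow> matching E M \<and> (\<forall>M'. matching E M' \<and> M \<subseteq> M' \<longrightarrow> M' = M)"

definition equimatchable :: "'a set set \<Rightarrow> bool" where
  "equimatchable E \<longleftrightarrow>
     (\<forall>M1 M2. maximal_matching E M1 \<and> maximal_matching E M2 \<longrightarrow> card M1 = card M2)"

definition induced_edges :: "'a set set \<Rightarrow> 'a set \<Rightarrow> 'a set set" where
  "induced_edges E S = {e \<in> E. e \<subseteq> S}"

definition perfect_matching :: "'a set \<Rightarrow> 'a set set \<Rightarrow> 'a set set \<Rightarrow> bool" where
  "perfect_matching V E M \<longleftrightarrow> matching E M \<and> \<Union>M = V"

definition has_perfect_matching :: "'a set \<Rightarrow> 'a set set \<Rightarrow> bool" where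
  "has_perfect_matching V E \<longleftrightarrow> (\<exists>M. perfect_matching V E M)"

definition factor_critical :: "'a set \<Rightarrow> 'a set set \<Rightarrow> bool" where
  "factor_critical V E \<longleftrightarrow>
     (\<forall>v\<in>V. has_perfect_matching (V - {v}) (induced_edges E (V - {v})))"

definition independent_set :: "'a set \<Rightarrow> 'a set set \<Rightarrow> 'a set \<Rightarrow> bool" where
  "independent_set V E I \<longleftrightarrow> I \<subseteq> V \<and> (\<forall>u\<in>I. \<forall>v\<in>I. {u, v} \<notin> E)"

end

theory Submission
  imports Defs
begin

text \<open>
  By factor-criticality, \<open>|V| = 2k + 1\<close> and \<open>G\<close> has a matching of size \<open>k\<close>, so every
  maximal matching has size \<open>k\<close> or less. A matching leaves exactly three vertices
  uncovered iff it has size \<open>k - 1\<close>, and it is maximal iff its uncovered vertices are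
  independent. A perfect matching of \<open>G \ I\<close> with \<open>I\<close> an independent triple is therefore a
  maximal matching of size \<open>k - 1\<close>, which rules out equimatchability. Conversely, a
  maximal matching \<open>A\<close> with \<open>|A| < k\<close> can be augmented from a matching of size \<open>k\<close>,
  one edge at a time and without uncovering vertices, to a matching of size \<open>k - 1\<close>;
  its three uncovered vertices are uncovered by \<open>A\<close> too, hence independent.
\<close>

lemma graph_edgeE:
  assumes "graph V E" "e \<in> E"
  obtains u v where "e = {u, v}" "u \<noteq> v" "u \<in> V" "v \<in> V"
  using assms unfolding graph_def by meson

lemma graph_edge_other_end:
  assumes "graph V E" "e \<in> E" "a \<in> e"
  obtains b where "e = {a, b}" "a \<noteq> b" "b \<in> V"
  using graph_edgeE[OF assms(1,2)] assms(3) by (metis insert_commute insertE singletonD)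

lemma graph_edge_subset: "graph V E \<Longrightarrow> e \<in> E \<Longrightarrow> e \<subseteq> V"
  by (erule graph_edgeE) auto

lemma graph_finite_vertices: "graph V E \<Longrightarrow> finite V"
  unfolding graph_def by simp

lemma graph_finite_edges:
  assumes "graph V E"
  shows "finite E"
proof (rule finite_subset)
  show "E \<subseteq> Pow V" using graph_edge_subset[OF assms] by auto
  show "finite (Pow V)" using graph_finite_vertices[OF assms] by simp
qed

lemma matching_subset_edges: "matching E M \<Longrightarrow> M \<subseteq> E"
  unfolding matching_def by simp

lemma matching_disjoint: "matching E M \<Longrightarrow> e \<in> M \<Longrightarrow> f \<in> M \<Longrightarrow> e \<noteq> f \<Longrightarrow> e \<inter> f = {}"
  unfolding matching_def by blast

lemma matching_Diff: "matching E M \<Longrightarrow> matching E (M - X)"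
  unfolding matching_def by blast

lemma matching_insert:
  "matching E M \<Longrightarrow> e \<in> E \<Longrightarrow> \<forall>f\<in>M. e \<inter> f = {} \<Longrightarrow> matching E (insert e M)"
  unfolding matching_def by blast

lemma matching_finite: "graph V E \<Longrightarrow> matching E M \<Longrightarrow> finite M"
  using graph_finite_edges matching_subset_edges finite_subset by metis

lemma Union_matching_subset: "graph V E \<Longrightarrow> matching E M \<Longrightarrow> \<Union>M \<subseteq> V"
  using graph_edge_subset matching_subset_edges by blast

lemma card_Union_matching:
  assumes g: "graph V E" and m: "matching E M"
  shows "card (\<Union>M) = 2 * card M"
proof -
  have two: "card e = 2" if "e \<in> M" for e
    using graph_edgeE[OF g] matching_subset_edges[OF m] that by (metis card_2_iff subsetD)
  have "pairwise disjnt M"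
    using matching_disjoint[OF m] unfolding pairwise_def disjnt_def by blast
  then have "card (\<Union>M) = sum card M"
    by (rule card_Union_disjoint) (use two card.infinite in fastforce)
  also have "\<dots> = 2 * card M" using two by simp
  finally show ?thesis .
qed

lemma perfect_matching_induced_iff:
  "perfect_matching S (induced_edges E S) M \<longleftrightarrow> matching E M \<and> \<Union>M = S"
  unfolding perfect_matching_def matching_def induced_edges_def by blast

lemma factor_critical_near_perfect_matching:
  assumes g: "graph V E" and fc: "factor_critical V E" and v: "v \<in> V"
  obtains P where "matching E P" "card V = Suc (2 * card P)"
proof -
  obtain P where "perfect_matching (V - {v}) (induced_edges E (V - {v})) P"
    using fc v unfolding factor_critical_def has_perfect_matching_def by blast
  then have mP: "matching E P" and cover: "\<Union>P = V - {v}"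
    by (simp_all add: perfect_matching_induced_iff)
  have "card V > 0" using v graph_finite_vertices[OF g] by (auto simp: card_gt_0_iff)
  moreover have "2 * card P = card V - 1"
    using card_Union_matching[OF g mP] cover v graph_finite_vertices[OF g] by simp
  ultimately show thesis using that mP by simp
qed

lemma maximal_matching_iff_uncovered_independent:
  assumes g: "graph V E"
  shows "maximal_matching E M \<longleftrightarrow> matching E M \<and> independent_set V E (V - \<Union>M)"
proof (intro iffI conjI)
  assume max: "maximal_matching E M"
  then show m: "matching E M" unfolding maximal_matching_def by simp
  show "independent_set V E (V - \<Union>M)"
    unfolding independent_set_def
  proof (intro conjI ballI notI)
    fix u v assume uv: "u \<in> V - \<Union>M" "v \<in> V - \<Union>M" and e: "{u, v} \<in> E"
    have "matching E (insert {u, v} M)"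
      using matching_insert[OF m e] uv by blast
    then have "{u, v} \<in> M" using max unfolding maximal_matching_def by blast
    then show False using uv by blast
  qed simp
next
  assume m: "matching E M \<and> independent_set V E (V - \<Union>M)"
  show "maximal_matching E M"
    unfolding maximal_matching_def
  proof (intro conjI allI impI)
    fix M' assume M': "matching E M' \<and> M \<subseteq> M'"
    show "M' = M"
    proof (rule ccontr)
      assume "M' \<noteq> M"
      then obtain e where e: "e \<in> M'" "e \<notin> M" using M' by blast
      then have "e \<in> E" using M' matching_subset_edges by blast
      then obtain u v where uv: "e = {u, v}" "u \<in> V" "v \<in> V" by (rule graph_edgeE[OF g])
      have "e \<inter> f = {}" if "f \<in> M" for f
        using matching_disjoint[of E M' e f] M' e that by blast
      then have "u \<in> V - \<Union>M" "v \<in> V - \<Union>M" using uv by auto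
      then show False using m \<open>e \<in> E\<close> uv unfolding independent_set_def by blast
    qed
  qed (use m in simp)
qed

lemma matching_extends_to_maximal:
  assumes g: "graph V E" and "matching E N"
  obtains M where "maximal_matching E M" "N \<subseteq> M"
proof -
  have "finite {M. matching E M}"
    using graph_finite_edges[OF g] matching_subset_edges
    by (metis (no_types, lifting) Collect_mono Pow_def finite_Pow_iff finite_subset)
  then obtain M where "matching E M" "N \<subseteq> M" "\<forall>M'. matching E M' \<and> M \<subseteq> M' \<longrightarrow> M' = M"
    using finite_has_maximal2[of "{M. matching E M}" N] assms(2) by auto
  then show thesis using that unfolding maximal_matching_def by blast
qed

lemma matching_add_path_edge:
  assumes m: "matching E M" and fin: "finite M"
    and avoid: "\<forall>h\<in>M. a \<notin> h \<and> b \<notin> h" and ab: "{a, b} \<in> E" and bc: "{b, c} \<in> E"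
  shows "\<exists>M'. matching E M' \<and> card M' = Suc (card M) \<and> \<Union>M \<union> {b, c} \<subseteq> \<Union>M'
           \<and> M' \<subseteq> insert {a, b} (insert {b, c} M)"
proof (cases "c \<in> \<Union>M")
  case True
  have "matching E (insert {a, b} M)" using matching_insert[OF m ab] avoid by blast
  moreover have "{a, b} \<notin> M" using avoid by blast
  ultimately show ?thesis using True fin by (intro exI[of _ "insert {a, b} M"]) auto
next
  case False
  have "matching E (insert {b, c} M)" using matching_insert[OF m bc] avoid False by blast
  moreover have "{b, c} \<notin> M" using avoid by blast
  ultimately show ?thesis using fin by (intro exI[of _ "insert {b, c} M"]) auto
qed

text \<open>The recursive case of the exchange property: \<open>M\<^sub>1\<close> comes from augmenting
  \<open>M - {{b, c}}\<close> from \<open>N - {{a, b}}\<close>, so none of its edges meets \<open>{a, b}\<close>.\<close>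
lemma matching_augment_along_path:
  assumes g: "graph V E" and mM: "matching E M" and mN: "matching E N"
    and fM: "{b, c} \<in> M" and eN: "{a, b} \<in> N" and aM: "a \<notin> \<Union>M"
    and m1: "matching E M1" and card1: "card M1 = card M"
    and cover1: "\<Union>(M - {{b, c}}) \<subseteq> \<Union>M1" and sub1: "M1 \<subseteq> (M - {{b, c}}) \<union> (N - {{a, b}})"
  shows "\<exists>M'. matching E M' \<and> card M' = Suc (card M) \<and> \<Union>M \<subseteq> \<Union>M' \<and> M' \<subseteq> M \<union> N"
proof -
  have avoid: "\<forall>h\<in>M1. a \<notin> h \<and> b \<notin> h"
  proof
    fix h assume "h \<in> M1"
    then consider "h \<in> M" "h \<noteq> {b, c}" | "h \<in> N" "h \<noteq> {a, b}" using sub1 by blast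
    then show "a \<notin> h \<and> b \<notin> h"
    proof cases
      case 1
      then have "h \<inter> {b, c} = {}" using matching_disjoint[OF mM _ fM] by blast
      then show ?thesis using 1 aM by blast
    next
      case 2
      then have "h \<inter> {a, b} = {}" using matching_disjoint[OF mN _ eN] by blast
      then show ?thesis by blast
    qed
  qed
  have ab: "{a, b} \<in> E" and bc: "{b, c} \<in> E"
    using fM eN matching_subset_edges[OF mM] matching_subset_edges[OF mN] by blast+
  obtain M' where m': "matching E M'" and card': "card M' = Suc (card M1)"
    and cover': "\<Union>M1 \<union> {b, c} \<subseteq> \<Union>M'" and sub': "M' \<subseteq> insert {a, b} (insert {b, c} M1)"
    using matching_add_path_edge[OF m1 matching_finite[OF g m1] avoid ab bc] by blast
  have "\<Union>M \<subseteq> \<Union>(M - {{b, c}}) \<union> {b, c}" by blast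
  also have "\<dots> \<subseteq> \<Union>M'" using cover1 cover' by blast
  finally have "\<Union>M \<subseteq> \<Union>M'" .
  moreover have "M' \<subseteq> M \<union> N" using sub' sub1 eN fM by blast
  ultimately show ?thesis using m' card' card1 by auto
qed

text \<open>Exchange property of matchings, by induction on \<open>|N|\<close>: an \<open>N\<close>-edge \<open>{a, b}\<close> with \<open>a\<close>
  uncovered either extends \<open>M\<close> directly, or \<open>b\<close> lies on an \<open>M\<close>-edge \<open>{b, c}\<close> and we recurse
  after removing both edges.\<close>
lemma matching_augment:
  assumes g: "graph V E"
  shows "matching E N \<Longrightarrow> matching E M \<Longrightarrow> card M < card N \<Longrightarrow>
    \<exists>M'. matching E M' \<and> card M' = Suc (card M) \<and> \<Union>M \<subseteq> \<Union>M' \<and> M' \<subseteq> M \<union> N"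
proof (induction "card N" arbitrary: M N rule: less_induct)
  case less
  note mN = less.prems(1) and mM = less.prems(2)
  have finM: "finite M" and finN: "finite N" using g mM mN by (auto intro: matching_finite)
  have "card (\<Union>M) < card (\<Union>N)"
    using card_Union_matching[OF g mM] card_Union_matching[OF g mN] less.prems(3) by simp
  moreover have "finite (\<Union>M)"
    using Union_matching_subset[OF g mM] graph_finite_vertices[OF g] by (rule finite_subset)
  ultimately have "\<not> \<Union>N \<subseteq> \<Union>M" by (auto dest: card_mono)
  then obtain a where "a \<in> \<Union>N" and aM: "a \<notin> \<Union>M" by blast
  then obtain e where eN: "e \<in> N" and "a \<in> e" by blast
  have eE: "e \<in> E" using eN matching_subset_edges[OF mN] by blast
  then obtain b where e: "e = {a, b}" using graph_edge_other_end[OF g _ \<open>a \<in> e\<close>] by blast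
  show ?case
  proof (cases "b \<in> \<Union>M")
    case False
    have "matching E (insert e M)" using matching_insert[OF mM eE] aM False e by blast
    moreover have "e \<notin> M" using aM e by blast
    ultimately show ?thesis using eN finM by (intro exI[of _ "insert e M"]) auto
  next
    case True
    then obtain f where fM: "f \<in> M" and "b \<in> f" by blast
    have "f \<in> E" using fM matching_subset_edges[OF mM] by blast
    then obtain c where f: "f = {b, c}" using graph_edge_other_end[OF g _ \<open>b \<in> f\<close>] by blast
    have "card M > 0" using fM finM card_gt_0_iff by blast
    then have "card (M - {f}) < card (N - {e})" and card_Diff: "Suc (card (M - {f})) = card M"
      using less.prems(3) fM eN finM finN by (simp_all add: card_Diff_singleton)
    then obtain M1 where m1: "matching E M1" and "card M1 = Suc (card (M - {f}))"
      and cover1: "\<Union>(M - {f}) \<subseteq> \<Union>M1" and sub1: "M1 \<subseteq> (M - {f}) \<union> (N - {e})"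
      using less.hyps[OF card_Diff1_less[OF finN eN] matching_Diff[OF mN] matching_Diff[OF mM, of "{f}"]]
      by blast
    moreover from card_Diff this(2) have "card M1 = card M" by simp
    ultimately show ?thesis
      using matching_augment_along_path[OF g mM mN fM[unfolded f] eN[unfolded e] aM]
      unfolding e f by blast
  qed
qed

lemma matching_grow:
  assumes g: "graph V E" and mP: "matching E P" and mM: "matching E M"
    and "card M \<le> k" "k \<le> card P"
  obtains M' where "matching E M'" "card M' = k" "\<Union>M \<subseteq> \<Union>M'"
proof -
  have "\<exists>M'. matching E M' \<and> card M' = card M + i \<and> \<Union>M \<subseteq> \<Union>M'" if "card M + i \<le> card P" for i
    using that
  proof (induction i)
    case 0
    show ?case using mM by (intro exI[of _ M]) simp
  next
    case (Suc i)
    then obtain M1 where m1: "matching E M1" "card M1 = card M + i" "\<Union>M \<subseteq> \<Union>M1" by auto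
    moreover have "card M1 < card P" using m1(2) Suc.prems by simp
    ultimately obtain M' where
      "matching E M'" "card M' = card M + Suc i" "\<Union>M1 \<subseteq> \<Union>M'"
      using matching_augment[OF g mP m1(1)] by auto
    then show ?case using m1(3) by blast
  qed
  then show thesis using that assms(4,5) by (metis le_add_diff_inverse)
qed

lemma not_equimatchable_if_independent_triple:
  assumes g: "graph V E" and fc: "factor_critical V E"
    and I: "independent_set V E I" "card I = 3"
    and pm: "has_perfect_matching (V - I) (induced_edges E (V - I))"
  shows "\<not> equimatchable E"
proof
  assume eq: "equimatchable E"
  have finV: "finite V" using graph_finite_vertices[OF g] .
  obtain M where "perfect_matching (V - I) (induced_edges E (V - I)) M"
    using pm unfolding has_perfect_matching_def ..
  then have m: "matching E M" and cover: "\<Union>M = V - I"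
    by (simp_all add: perfect_matching_induced_iff)
  have IV: "I \<subseteq> V" using I unfolding independent_set_def by simp
  then have "V - \<Union>M = I" using cover by blast
  then have "maximal_matching E M"
    using maximal_matching_iff_uncovered_independent[OF g] m I by simp
  have "I \<noteq> {}" using I by auto
  then obtain P where mP: "matching E P" and cardP: "card V = Suc (2 * card P)"
    using factor_critical_near_perfect_matching[OF g fc] IV by blast
  obtain Q where "maximal_matching E Q" "P \<subseteq> Q"
    using matching_extends_to_maximal[OF g mP] .
  have "card P \<le> card Q"
    using \<open>P \<subseteq> Q\<close> \<open>maximal_matching E Q\<close> matching_finite[OF g]
    unfolding maximal_matching_def by (blast intro: card_mono)
  moreover have "card Q = card M"
    using eq \<open>maximal_matching E Q\<close> \<open>maximal_matching E M\<close>
    unfolding equimatchable_def by blast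
  moreover have "card (V - I) = card V - card I" and "card I \<le> card V"
    using card_Diff_subset[OF finite_subset[OF IV finV] IV] card_mono[OF finV IV] by simp_all
  ultimately show False using cardP card_Union_matching[OF g m] I(2) unfolding cover by linarith
qed

lemma independent_triple_if_not_equimatchable:
  assumes g: "graph V E" and fc: "factor_critical V E"
    and A: "maximal_matching E A" and B: "maximal_matching E B" and lt: "card A < card B"
  shows "\<exists>I. independent_set V E I \<and> card I = 3 \<and>
           has_perfect_matching (V - I) (induced_edges E (V - I))"
proof -
  have mA: "matching E A" and mB: "matching E B"
    using A B unfolding maximal_matching_def by simp_all
  have finV: "finite V" using graph_finite_vertices[OF g] .
  obtain e where "e \<in> B" using lt by fastforce
  then have "e \<in> E" using matching_subset_edges[OF mB] by blast
  then obtain x y where "e = {x, y}" "x \<in> V" by (rule graph_edgeE[OF g])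
  then obtain P where mP: "matching E P" and cardP: "card V = Suc (2 * card P)"
    using factor_critical_near_perfect_matching[OF g fc] by blast
  have "2 * card B \<le> card V"
    using card_Union_matching[OF g mB] Union_matching_subset[OF g mB] finV by (metis card_mono)
  then have "1 \<le> card P" "card A \<le> card P - 1" using cardP lt by linarith+
  then obtain M where mM: "matching E M" and cardM: "card M = card P - 1" and cover: "\<Union>A \<subseteq> \<Union>M"
    using matching_grow[OF g mP mA] by (metis diff_le_self)
  define I where "I = V - \<Union>M"
  have MV: "\<Union>M \<subseteq> V" using Union_matching_subset[OF g mM] .
  have "card I = 3"
    using card_Diff_subset[OF finite_subset[OF MV finV] MV] card_Union_matching[OF g mM]
      cardM cardP \<open>1 \<le> card P\<close> unfolding I_def by linarith
  moreover have "independent_set V E I"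
  proof -
    have "independent_set V E (V - \<Union>A)"
      using A maximal_matching_iff_uncovered_independent[OF g] by blast
    moreover have "I \<subseteq> V - \<Union>A" using cover unfolding I_def by blast
    ultimately show ?thesis unfolding independent_set_def by blast
  qed
  moreover have "V - I = \<Union>M" using MV unfolding I_def by blast
  then have "has_perfect_matching (V - I) (induced_edges E (V - I))"
    using mM unfolding has_perfect_matching_def perfect_matching_induced_iff by blast
  ultimately show ?thesis by blast
qed

theorem lemma3p1:
  fixes V :: "'a set" and E :: "'a set set"
  assumes "graph V E"
    and "factor_critical V E"
  shows "equimatchable E \<longleftrightarrow>
    \<not> (\<exists>I. independent_set V E I \<and> card I = 3 \<and>
           has_perfect_matching (V - I) (induced_edges E (V - I)))"
proof
  show "equimatchable E \<Longrightarrow> \<not> (\<exists>I. independent_set V E I \<and> card I = 3 \<and>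
           has_perfect_matching (V - I) (induced_edges E (V - I)))"
    using not_equimatchable_if_independent_triple[OF assms] by blast
next
  assume no_triple: "\<not> (\<exists>I. independent_set V E I \<and> card I = 3 \<and>
           has_perfect_matching (V - I) (induced_edges E (V - I)))"
  show "equimatchable E"
    unfolding equimatchable_def
  proof (intro allI impI)
    fix M1 M2 assume "maximal_matching E M1 \<and> maximal_matching E M2"
    then show "card M1 = card M2"
      using independent_triple_if_not_equimatchable[OF assms] no_triple
      by (metis linorder_neqE_nat)
  qed
qed

end
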